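(* Let $(T_n, n\in\mathbb N^* )$ and $T$ be $\mathbb T$-valued random variables which almost surely belong to $\mathbb T_0\cup\mathbb T_1$. Then $(T_n)$ converges in distribution to $T$ (for the metric $d$) if and only if for every $\mathbf t\in\mathbb T_0$ and every $x\in\mathcal L_0(\mathbf t)$, \[ \lim_{n\to\infty}\mathbb P(T_n\in\mathbb T(\mathbf t,x))=\mathbb P(T\in\mathbb T(\mathbf t,x))\quad\text{and}\quad \lim_{n\to\infty}\mathbb P(T_n=\mathbf t)=\mathbb P(T=\mathbf t). \]
   Context: Let $\mathcal U=\bigcup_{n\ge0}(\mathbb N^* )^n$ be the set of finite sequences of positive integers (with $(\mathbb N^* )^0=\{\emptyset\}$); $|u|$ denotes the length of $u$ and $uv$ the concatenation. A tree is a subset $\mathbf t\subset\mathcal U$ with $\emptyset\in\mathbf t$, such that $uv\in\mathbf t$ implies $u\in\mathbf t$, and such that for every $u\in\mathbf t$ there is an integer $k_u(\mathbf t)\ge0$ with $ui\in\mathbf t\iff 1\le i\le k_u(\mathbf t)$ for $i\in\mathbb N^*$. The leaves are $\mathcal L_0(\mathbf t)=\{u\in\mathbf t:k_u(\mathbf t)=0\}$. $\mathbb T$ is the set of trees, $\mathbb T_0$ the set of finite trees. For a set $\mathbf s\subset\mathcal U$, $M(\mathbf s)$ is the longest $u\in\mathcal U$ which is a prefix (ancestor) of every element of $\mathbf s$; $\mathbb T_1=\{\mathbf t\in\mathbb T:\lim_{n\to\infty}|M(\{u\in\mathbf t:|u|=n\})|=+\infty\}$ is the set of trees with a unique infinite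 spine. For $h\in\mathbb N$, $r_h(\mathbf t)=\{u\in\mathbf t:|u|\le h\}$, and $\mathbb T$ carries the metric $d(\mathbf t,\mathbf t')=2^{-\max\{h\in\mathbb N:r_h(\mathbf t)=r_h(\mathbf t')\}}$ (with its Borel $\sigma$-field); convergence in distribution refers to this metric. For $\mathbf t\in\mathbb T$, $x\in\mathcal L_0(\mathbf t)$ and $\mathbf s\in\mathbb T$, the grafted tree is $\mathbf t\circledast(\mathbf s,x)=\mathbf t\cup\{xv:v\in\mathbf s\}$, and $\mathbb T(\mathbf t,x)=\{\mathbf t\circledast(\mathbf s,x):\mathbf s\in\mathbb T\}$. *)

theory Defs
  imports "HOL-Probability.Probability" "HOL-Library.Sublist"
begin

text \<open>Nodes: finite sequences of positive integers, represented as lists of naturals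
  all of whose entries are at least 1.  Trees are sets of such nodes.\<close>

type_synonym node = "nat list"

definition is_tree :: "node set \<Rightarrow> bool" where
  "is_tree t \<longleftrightarrow>
     (\<forall>u\<in>t. \<forall>i\<in>set u. 1 \<le> i) \<and>
     [] \<in> t \<and>
     (\<forall>u v. u @ v \<in> t \<longrightarrow> u \<in> t) \<and>
     (\<forall>u\<in>t. \<exists>k::nat. \<forall>i::nat. 1 \<le> i \<longrightarrow> (u @ [i] \<in> t \<longleftrightarrow> i \<le> k))"

definition Trees :: "node set set" where
  "Trees = {t. is_tree t}"

definition Trees0 :: "node set set" where
  "Trees0 = {t \<in> Trees. finite t}"

definition leaves :: "node set \<Rightarrow> node set" where
  "leaves t = {u \<in> t. \<forall>i::nat. 1 \<le> i \<longrightarrow> u @ [i] \<notin> t}"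

text \<open>Longest common prefix (ancestor) of a set of nodes (meaningful for nonempty sets).\<close>
definition M_pref :: "node set \<Rightarrow> node" where
  "M_pref s = (THE u. (\<forall>v\<in>s. prefix u v) \<and>
                       (\<forall>w. (\<forall>v\<in>s. prefix w v) \<longrightarrow> length w \<le> length u))"

definition level :: "node set \<Rightarrow> nat \<Rightarrow> node set" where
  "level t n = {u \<in> t. length u = n}"

definition Trees1 :: "node set set" where
  "Trees1 = {t \<in> Trees. (\<forall>n. level t n \<noteq> {}) \<and>
              filterlim (\<lambda>n. length (M_pref (level t n))) at_top sequentially}"

definition restr :: "nat \<Rightarrow> node set \<Rightarrow> node set" where
  "restr h t = {u \<in> t. length u \<le> h}"

definition tree_dist :: "node set \<Rightarrow> node set \<Rightarrow> real" where
  "tree_dist t t' = (if t = t' then 0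
                     else (1/2) ^ (GREATEST h. restr h t = restr h t'))"

definition tree_open :: "node set set \<Rightarrow> bool" where
  "tree_open U \<longleftrightarrow> U \<subseteq> Trees \<and>
     (\<forall>t\<in>U. \<exists>e>0. \<forall>t'\<in>Trees. tree_dist t t' < e \<longrightarrow> t' \<in> U)"

definition tree_space :: "node set measure" where
  "tree_space = sigma Trees {U. tree_open U}"

definition tree_bounded_continuous :: "(node set \<Rightarrow> real) \<Rightarrow> bool" where
  "tree_bounded_continuous f \<longleftrightarrow>
     (\<exists>B. \<forall>t\<in>Trees. \<bar>f t\<bar> \<le> B) \<and>
     (\<forall>t\<in>Trees. \<forall>e>0. \<exists>\<delta>>0. \<forall>t'\<in>Trees. tree_dist t t' < \<delta> \<longrightarrow> \<bar>f t' - f t\<bar> < e)"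

definition conv_distr :: "'a measure \<Rightarrow> (nat \<Rightarrow> 'a \<Rightarrow> node set) \<Rightarrow> ('a \<Rightarrow> node set) \<Rightarrow> bool" where
  "conv_distr P T X \<longleftrightarrow>
     (\<forall>f. tree_bounded_continuous f \<longrightarrow>
        (\<lambda>n. \<integral>\<omega>. f (T n \<omega>) \<partial>P) \<longlonglongrightarrow> (\<integral>\<omega>. f (X \<omega>) \<partial>P))"

definition graft :: "node set \<Rightarrow> node set \<Rightarrow> node \<Rightarrow> node set" where
  "graft t s x = t \<union> {x @ v | v. v \<in> s}"

definition graft_set :: "node set \<Rightarrow> node \<Rightarrow> node set set" where
  "graft_set t x = {graft t s x | s. s \<in> Trees}"

end

theory Submission
  imports Defs
begin

text \<open>
  Membership in \<open>{t}\<close> or in a graft set \<open>\<T>(t, x)\<close> (\<open>t\<close> finite, \<open>x\<close> a leaf) is decided by the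
  restriction of a tree to a bounded height, so their indicators are continuous; this gives
  the forward direction. Conversely, these sets form, together with \<open>{}\<close>, a countable class
  closed under intersection: two graft sets are nested, disjoint, or meet in a single finite
  tree. By inclusion-exclusion the probabilities of finite unions of them converge. Every tree
  with finitely many nodes or a unique spine lies in such sets of arbitrarily small diameter:
  a finite tree is its own singleton, and a tree with one spine is obtained by grafting at a
  deep node of the spine onto a finite tree. Hence for a bounded continuous \<open>f\<close> and
  \<open>\<epsilon> > 0\<close>, finitely many such sets on which \<open>f\<close> oscillates by at most \<open>\<epsilon>\<close> carry all but
  \<open>\<epsilon>\<close> of the law of the limit, and on their disjointed union \<open>f\<close> is uniformly close to a step
  function whose expectations converge.
\<close>

section \<open>Expectations and intersection-stable classes of events\<close>

lemma measurable_Collect_mem: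
  "Y \<in> measurable M N \<Longrightarrow> A \<in> sets N \<Longrightarrow> {\<omega> \<in> space M. Y \<omega> \<in> A} \<in> sets M"
  using measurable_sets[of Y M N A] by (simp add: vimage_def Int_def conj_commute)

lemma (in finite_measure) finite_measure_Un_Int:
  "A \<in> sets M \<Longrightarrow> B \<in> sets M \<Longrightarrow> measure M (A \<union> B) = measure M A + measure M B - measure M (A \<inter> B)"
  by (simp add: finite_measure_Union' finite_measure_Diff' Int_commute)

lemma (in prob_space) tendsto_prob_Union_Int_stable:
  fixes Y :: "nat \<Rightarrow> 'a \<Rightarrow> 'b"
  assumes Y: "\<And>n. Y n \<in> measurable M N" and Z: "Z \<in> measurable M N"
    and C: "C \<subseteq> sets N" "\<And>A B. A \<in> C \<Longrightarrow> B \<in> C \<Longrightarrow> A \<inter> B \<in> C"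
    and conv: "\<And>A. A \<in> C \<Longrightarrow> (\<lambda>n. prob {\<omega> \<in> space M. Y n \<omega> \<in> A}) \<longlonglongrightarrow> prob {\<omega> \<in> space M. Z \<omega> \<in> A}"
    and F: "finite F" "F \<subseteq> C"
  shows "(\<lambda>n. prob {\<omega> \<in> space M. Y n \<omega> \<in> \<Union>F}) \<longlonglongrightarrow> prob {\<omega> \<in> space M. Z \<omega> \<in> \<Union>F}"
  using F
proof (induction F rule: measure_induct_rule[of card])
  case (less F)
  show ?case
  proof (cases "F = {}")
    case False
    then obtain A where "A \<in> F" by blast
    then obtain F' where F': "F = insert A F'" "A \<notin> F'" by (meson mk_disjoint_insert)
    have A: "A \<in> C" and fin: "finite F'" and sub: "F' \<subseteq> C" using less.prems F' by auto
    have card: "card F' < card F" "card ((\<inter>) A ` F') < card F"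
      using F' fin card_image_le[OF fin, of "(\<inter>) A"] by auto
    have IH1: "(\<lambda>n. prob {\<omega> \<in> space M. Y n \<omega> \<in> \<Union>F'}) \<longlonglongrightarrow> prob {\<omega> \<in> space M. Z \<omega> \<in> \<Union>F'}"
      using less.IH[OF card(1) fin sub] .
    have IH2: "(\<lambda>n. prob {\<omega> \<in> space M. Y n \<omega> \<in> A \<inter> \<Union>F'}) \<longlonglongrightarrow> prob {\<omega> \<in> space M. Z \<omega> \<in> A \<inter> \<Union>F'}"
      unfolding Int_Union using less.IH[OF card(2)] fin sub C(2)[OF A] by blast
    have sets: "A \<in> sets N" "\<Union>F' \<in> sets N" using A sub C(1) fin by auto
    have split: "prob {\<omega> \<in> space M. W \<omega> \<in> \<Union>F} = prob {\<omega> \<in> space M. W \<omega> \<in> A}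
        + prob {\<omega> \<in> space M. W \<omega> \<in> \<Union>F'} - prob {\<omega> \<in> space M. W \<omega> \<in> A \<inter> \<Union>F'}"
      if "W \<in> measurable M N" for W
    proof -
      have "{\<omega> \<in> space M. W \<omega> \<in> \<Union>F} = {\<omega> \<in> space M. W \<omega> \<in> A} \<union> {\<omega> \<in> space M. W \<omega> \<in> \<Union>F'}"
        "{\<omega> \<in> space M. W \<omega> \<in> A \<inter> \<Union>F'} = {\<omega> \<in> space M. W \<omega> \<in> A} \<inter> {\<omega> \<in> space M. W \<omega> \<in> \<Union>F'}"
        using F' by auto
      then show ?thesis
        by (simp only: finite_measure_Un_Int measurable_Collect_mem[OF that] sets)
    qed
    show ?thesis
      unfolding split[OF Y] split[OF Z] using conv[OF A] IH1 IH2 by (intro tendsto_intros)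
  qed simp
qed

lemma sum_indicator_disjoint_family:
  assumes "disjoint_family D" "x \<in> D i" "i \<in> I" "finite I"
  shows "(\<Sum>j\<in>I. a j * indicator (D j) x) = (a i :: real)"
proof -
  have "indicator (D j) x = (if j = i then 1 else 0 :: real)" for j
    using assms(1,2) by (auto simp: disjoint_family_on_def indicator_def)
  then have "(\<Sum>j\<in>I. a j * indicator (D j) x) = (\<Sum>j\<in>I. if j = i then a j else 0)"
    by (intro sum.cong) auto
  then show ?thesis using assms(3,4) by simp
qed

lemma (in prob_space) integral_step_approx:
  fixes f :: "'b \<Rightarrow> real" and G :: "nat \<Rightarrow> 'b set"
  assumes Y: "Y \<in> measurable M N"
    and f: "f \<in> borel_measurable N" "\<And>x. x \<in> space N \<Longrightarrow> \<bar>f x\<bar> \<le> B"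
    and G: "\<And>i. G i \<in> sets N" and osc: "\<And>i x y. x \<in> G i \<Longrightarrow> y \<in> G i \<Longrightarrow> \<bar>f x - f y\<bar> \<le> \<epsilon>"
    and c: "\<And>i. G i \<noteq> {} \<Longrightarrow> c i \<in> G i" and "0 \<le> \<epsilon>"
  shows "\<bar>(\<integral>\<omega>. f (Y \<omega>) \<partial>M) - (\<Sum>i<k. f (c i) * prob {\<omega> \<in> space M. Y \<omega> \<in> disjointed G i})\<bar>
    \<le> \<epsilon> + B * (1 - prob {\<omega> \<in> space M. Y \<omega> \<in> (\<Union>i<k. G i)})"
proof -
  define D where "D i = {\<omega> \<in> space M. Y \<omega> \<in> disjointed G i}" for i
  define R where "R = {\<omega> \<in> space M. Y \<omega> \<in> (\<Union>i<k. G i)}"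
  define g where "g \<omega> = (\<Sum>i<k. f (c i) * indicator (D i) \<omega>)" for \<omega>
  have D: "D i \<in> events" for i
    using sets.range_disjointed_sets[of G N] G unfolding D_def by (auto intro: measurable_Collect_mem[OF Y])
  have R: "R \<in> events" unfolding R_def using G by (intro measurable_Collect_mem[OF Y]) auto
  have disj: "disjoint_family D"
    using disjoint_family_disjointed[of G] unfolding D_def disjoint_family_on_def by blast
  have int_f: "integrable M (\<lambda>\<omega>. f (Y \<omega>))"
    using f measurable_space[OF Y] measurable_compose[OF Y f(1)]
    by (intro integrable_const_bound[where B=B] AE_I2) auto
  have int_g: "integrable M g"
    unfolding g_def by (intro Bochner_Integration.integrable_sum integrable_mult_right integrable_real_indicator D)
      (simp_all add: less_top[symmetric])
  have int_err: "integrable M (\<lambda>\<omega>. \<epsilon> + B * indicator (space M - R) \<omega>)"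
    using R by (intro Bochner_Integration.integrable_add integrable_mult_right integrable_real_indicator)
      (auto simp: less_top[symmetric])
  have pointwise: "\<bar>f (Y \<omega>) - g \<omega>\<bar> \<le> \<epsilon> + B * indicator (space M - R) \<omega>" if "\<omega> \<in> space M" for \<omega>
  proof (cases "\<omega> \<in> R")
    case True
    then obtain i where i: "i < k" "Y \<omega> \<in> disjointed G i"
      using finite_UN_disjointed_eq[of G k] unfolding R_def by (auto simp: atLeast0LessThan)
    then have "\<omega> \<in> D i" and YG: "Y \<omega> \<in> G i" using that disjointed_subset[of G i] unfolding D_def by auto
    then have "g \<omega> = f (c i)"
      unfolding g_def using sum_indicator_disjoint_family[OF disj, of \<omega> i "{..<k}"] i(1) by simp
    then show ?thesis using osc[OF YG c] YG True by auto
  next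
    case False
    then have "\<omega> \<notin> D i" if "i < k" for i
      using that disjointed_subset[of G i] \<open>\<omega> \<in> space M\<close> unfolding D_def R_def by auto
    then have "g \<omega> = 0" unfolding g_def by simp
    moreover have "\<bar>f (Y \<omega>)\<bar> \<le> B" using f(2) measurable_space[OF Y that] .
    ultimately show ?thesis using False that \<open>0 \<le> \<epsilon>\<close> by simp
  qed
  have int_g_eq: "integral\<^sup>L M g = (\<Sum>i<k. f (c i) * prob (D i))"
    unfolding g_def using D
    by (subst Bochner_Integration.integral_sum) (auto simp: less_top[symmetric] Int_absorb2 sets.sets_into_space)
  have "\<bar>(\<integral>\<omega>. f (Y \<omega>) \<partial>M) - integral\<^sup>L M g\<bar> = \<bar>\<integral>\<omega>. f (Y \<omega>) - g \<omega> \<partial>M\<bar>"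
    using int_f int_g by simp
  also have "\<dots> \<le> (\<integral>\<omega>. \<bar>f (Y \<omega>) - g \<omega>\<bar> \<partial>M)" by (rule integral_abs_bound)
  also have "\<dots> \<le> (\<integral>\<omega>. \<epsilon> + B * indicator (space M - R) \<omega> \<partial>M)"
    using int_f int_g int_err pointwise by (intro integral_mono) auto
  also have "\<dots> = \<epsilon> + B * (1 - prob R)"
    using R by (subst Bochner_Integration.integral_add)
      (auto simp: less_top[symmetric] prob_space Int_absorb2 prob_compl)
  finally show ?thesis unfolding int_g_eq R_def D_def .
qed

lemma (in prob_space) tendsto_prob_disjointed:
  fixes Y :: "nat \<Rightarrow> 'a \<Rightarrow> 'b"
  assumes Y: "\<And>n. Y n \<in> measurable M N" and Z: "Z \<in> measurable M N"
    and C: "C \<subseteq> sets N" "\<And>A B. A \<in> C \<Longrightarrow> B \<in> C \<Longrightarrow> A \<inter> B \<in> C"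
    and conv: "\<And>A. A \<in> C \<Longrightarrow> (\<lambda>n. prob {\<omega> \<in> space M. Y n \<omega> \<in> A}) \<longlonglongrightarrow> prob {\<omega> \<in> space M. Z \<omega> \<in> A}"
    and G: "\<And>i. G i \<in> C"
  shows "(\<lambda>n. prob {\<omega> \<in> space M. Y n \<omega> \<in> disjointed G i}) \<longlonglongrightarrow> prob {\<omega> \<in> space M. Z \<omega> \<in> disjointed G i}"
proof -
  define U where "U j = \<Union>(G ` {..<j})" for j
  have conv_U: "(\<lambda>n. prob {\<omega> \<in> space M. Y n \<omega> \<in> U j}) \<longlonglongrightarrow> prob {\<omega> \<in> space M. Z \<omega> \<in> U j}" for j
    unfolding U_def using G by (intro tendsto_prob_Union_Int_stable[OF Y Z C conv]) auto
  have U_sets: "U j \<in> sets N" for j unfolding U_def using G C(1) by auto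
  have split: "prob {\<omega> \<in> space M. W \<omega> \<in> disjointed G i}
      = prob {\<omega> \<in> space M. W \<omega> \<in> U (Suc i)} - prob {\<omega> \<in> space M. W \<omega> \<in> U i}"
    if "W \<in> measurable M N" for W
  proof -
    have "{\<omega> \<in> space M. W \<omega> \<in> disjointed G i}
        = {\<omega> \<in> space M. W \<omega> \<in> U (Suc i)} - {\<omega> \<in> space M. W \<omega> \<in> U i}"
      unfolding U_def disjointed_def by (auto simp: lessThan_Suc atLeast0LessThan)
    moreover have "{\<omega> \<in> space M. W \<omega> \<in> U i} \<subseteq> {\<omega> \<in> space M. W \<omega> \<in> U (Suc i)}"
      unfolding U_def by (auto simp: lessThan_Suc)
    ultimately show ?thesis
      by (simp add: finite_measure_Diff measurable_Collect_mem[OF that U_sets])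
  qed
  show ?thesis unfolding split[OF Y] split[OF Z] by (intro tendsto_intros conv_U)
qed

lemma (in prob_space) finite_cover_small_oscillation:
  fixes f :: "'b \<Rightarrow> real"
  assumes Z: "Z \<in> measurable M N" and C: "countable C" "C \<subseteq> sets N" "{} \<in> C"
    and fine: "AE \<omega> in M. \<forall>\<epsilon>>0. \<exists>A\<in>C. Z \<omega> \<in> A \<and> (\<forall>x\<in>A. \<forall>y\<in>A. \<bar>f x - f y\<bar> \<le> \<epsilon>)"
    and "0 < \<epsilon>"
  obtains G k where "\<And>i. G i \<in> C" "\<And>i x y. x \<in> G i \<Longrightarrow> y \<in> G i \<Longrightarrow> \<bar>f x - f y\<bar> \<le> \<epsilon>"
    "prob {\<omega> \<in> space M. Z \<omega> \<in> (\<Union>i<k::nat. G i)} > 1 - \<epsilon>"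
proof -
  define F where "F = {A \<in> C. \<forall>x\<in>A. \<forall>y\<in>A. \<bar>f x - f y\<bar> \<le> \<epsilon>}"
  define G where "G = from_nat_into F"
  have "countable F" "{} \<in> F" using C unfolding F_def by auto
  then have "range G = F" unfolding G_def by (intro range_from_nat_into) auto
  then have G: "G i \<in> C" "x \<in> G i \<Longrightarrow> y \<in> G i \<Longrightarrow> \<bar>f x - f y\<bar> \<le> \<epsilon>" and G_UN: "(\<Union>i. G i) = \<Union>F"
    for i x y unfolding F_def by auto
  have G_sets: "G i \<in> sets N" for i using G(1) C(2) by auto
  have "AE \<omega> in M. Z \<omega> \<in> (\<Union>i. G i)"
    using fine by eventually_elim (use \<open>0 < \<epsilon>\<close> in \<open>auto simp: G_UN F_def\<close>)
  then have "prob {\<omega> \<in> space M. Z \<omega> \<in> (\<Union>i. G i)} = 1"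
    using G_sets by (intro prob_eq_1[THEN iffD2] measurable_Collect_mem[OF Z]) auto
  moreover have "(\<lambda>k. prob {\<omega> \<in> space M. Z \<omega> \<in> (\<Union>i<k. G i)})
      \<longlonglongrightarrow> prob (\<Union>k. {\<omega> \<in> space M. Z \<omega> \<in> (\<Union>i<k. G i)})"
  proof -
    have "{\<omega> \<in> space M. Z \<omega> \<in> (\<Union>i<k. G i)} \<in> events" for k
      using G_sets by (intro measurable_Collect_mem[OF Z]) auto
    then show ?thesis by (intro finite_Lim_measure_incseq) (auto simp: incseq_def)
  qed
  moreover have "(\<Union>k. {\<omega> \<in> space M. Z \<omega> \<in> (\<Union>i<k. G i)}) = {\<omega> \<in> space M. Z \<omega> \<in> (\<Union>i. G i)}"
    by auto
  ultimately have "\<forall>\<^sub>F k in sequentially. prob {\<omega> \<in> space M. Z \<omega> \<in> (\<Union>i<k. G i)} > 1 - \<epsilon>"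
    using \<open>0 < \<epsilon>\<close> by (intro order_tendstoD(1)) auto
  then obtain k where "prob {\<omega> \<in> space M. Z \<omega> \<in> (\<Union>i<k. G i)} > 1 - \<epsilon>"
    by (auto simp: eventually_sequentially)
  with G(1,2) show ?thesis by (rule that)
qed

lemma (in prob_space) tendsto_integral_if_tendsto_prob_Int_stable:
  fixes Y :: "nat \<Rightarrow> 'a \<Rightarrow> 'b" and f :: "'b \<Rightarrow> real"
  assumes Y: "\<And>n. Y n \<in> measurable M N" and Z: "Z \<in> measurable M N"
    and C: "countable C" "C \<subseteq> sets N" "{} \<in> C" "\<And>A B. A \<in> C \<Longrightarrow> B \<in> C \<Longrightarrow> A \<inter> B \<in> C"
    and conv: "\<And>A. A \<in> C \<Longrightarrow> (\<lambda>n. prob {\<omega> \<in> space M. Y n \<omega> \<in> A}) \<longlonglongrightarrow> prob {\<omega> \<in> space M. Z \<omega> \<in> A}"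
    and f: "f \<in> borel_measurable N" "\<And>x. x \<in> space N \<Longrightarrow> \<bar>f x\<bar> \<le> B"
    and fine: "AE \<omega> in M. \<forall>\<epsilon>>0. \<exists>A\<in>C. Z \<omega> \<in> A \<and> (\<forall>x\<in>A. \<forall>y\<in>A. \<bar>f x - f y\<bar> \<le> \<epsilon>)"
  shows "(\<lambda>n. \<integral>\<omega>. f (Y n \<omega>) \<partial>M) \<longlonglongrightarrow> (\<integral>\<omega>. f (Z \<omega>) \<partial>M)"
proof (rule LIMSEQ_I)
  fix r :: real assume "0 < r"
  \<comment> \<open>The total error bound obtained below is \<open>3 * \<epsilon> + 3 * \<bar>B\<bar> * \<epsilon>\<close>.\<close>
  define \<epsilon> where "\<epsilon> = (r / 6) / (1 + \<bar>B\<bar>)"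
  have B: "0 < 1 + \<bar>B\<bar>" by (simp add: add_pos_nonneg)
  then have "(1 + \<bar>B\<bar>) * \<epsilon> = r / 6"
    unfolding \<epsilon>_def by (metis nonzero_mult_div_cancel_left times_divide_eq_right less_irrefl)
  moreover have "3 * \<epsilon> + 3 * (\<bar>B\<bar> * \<epsilon>) = 3 * ((1 + \<bar>B\<bar>) * \<epsilon>)"
    by (simp add: algebra_simps)
  moreover have "0 < \<epsilon>" unfolding \<epsilon>_def using \<open>0 < r\<close> B by simp
  ultimately have \<epsilon>: "0 < \<epsilon>" "3 * \<epsilon> + 3 * (\<bar>B\<bar> * \<epsilon>) < r"
    using \<open>0 < r\<close> by linarith+
  obtain G k where G: "\<And>i. G i \<in> C" "\<And>i x y. x \<in> G i \<Longrightarrow> y \<in> G i \<Longrightarrow> \<bar>f x - f y\<bar> \<le> \<epsilon>"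
    and k: "prob {\<omega> \<in> space M. Z \<omega> \<in> (\<Union>i<k::nat. G i)} > 1 - \<epsilon>"
    using finite_cover_small_oscillation[OF Z C(1-3) fine \<open>0 < \<epsilon>\<close>] by blast
  have G_sets: "G i \<in> sets N" for i using G(1) C(2) by auto
  define c where "c i = (SOME x. x \<in> G i)" for i
  have c: "G i \<noteq> {} \<Longrightarrow> c i \<in> G i" for i unfolding c_def by (auto intro: someI)
  define P where "P W = prob {\<omega> \<in> space M. W \<omega> \<in> (\<Union>i<k. G i)}" for W
  define S where "S W = (\<Sum>i<k. f (c i) * prob {\<omega> \<in> space M. W \<omega> \<in> disjointed G i})" for W
  have P_Z: "P Z > 1 - \<epsilon>" using k unfolding P_def .
  have "(\<lambda>n. P (Y n)) \<longlonglongrightarrow> P Z"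
    unfolding P_def using G by (intro tendsto_prob_Union_Int_stable[OF Y Z C(2,4) conv]) auto
  then have "\<forall>\<^sub>F n in sequentially. \<bar>P (Y n) - P Z\<bar> < \<epsilon>"
    using \<epsilon>(1) by (simp add: tendsto_iff dist_real_def)
  moreover have "(\<lambda>n. S (Y n)) \<longlonglongrightarrow> S Z"
    unfolding S_def using G by (intro tendsto_intros tendsto_prob_disjointed[OF Y Z C(2,4) conv])
  then have "\<forall>\<^sub>F n in sequentially. \<bar>S (Y n) - S Z\<bar> < \<epsilon>"
    using \<epsilon>(1) by (simp add: tendsto_iff dist_real_def)
  ultimately have "\<forall>\<^sub>F n in sequentially. \<bar>P (Y n) - P Z\<bar> < \<epsilon> \<and> \<bar>S (Y n) - S Z\<bar> < \<epsilon>"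
    by (rule eventually_conj)
  then show "\<exists>n0. \<forall>n\<ge>n0. norm ((\<integral>\<omega>. f (Y n \<omega>) \<partial>M) - (\<integral>\<omega>. f (Z \<omega>) \<partial>M)) < r"
    unfolding eventually_sequentially
  proof (elim exE, intro exI allI impI)
    fix n0 n assume "\<forall>n\<ge>n0. \<bar>P (Y n) - P Z\<bar> < \<epsilon> \<and> \<bar>S (Y n) - S Z\<bar> < \<epsilon>" "n0 \<le> n"
    then have close: "\<bar>P (Y n) - P Z\<bar> < \<epsilon>" "\<bar>S (Y n) - S Z\<bar> < \<epsilon>" by auto
    have approx: "\<bar>(\<integral>\<omega>. f (W \<omega>) \<partial>M) - S W\<bar> \<le> \<epsilon> + \<bar>B\<bar> * (1 - P W)"
      if "W \<in> measurable M N" for W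
      unfolding S_def P_def using f(2) \<epsilon>(1)
      by (intro integral_step_approx[OF that f(1) _ G_sets G(2) c]) (auto intro: order_trans[OF _ abs_ge_self])
    have "\<bar>B\<bar> * (1 - P (Y n)) \<le> 2 * (\<bar>B\<bar> * \<epsilon>)" "\<bar>B\<bar> * (1 - P Z) \<le> \<bar>B\<bar> * \<epsilon>"
      using mult_left_mono[of "1 - P (Y n)" "2 * \<epsilon>" "\<bar>B\<bar>"] mult_left_mono[of "1 - P Z" \<epsilon> "\<bar>B\<bar>"]
        close P_Z by (auto simp: abs_less_iff)
    then show "norm ((\<integral>\<omega>. f (Y n \<omega>) \<partial>M) - (\<integral>\<omega>. f (Z \<omega>) \<partial>M)) < r"
      using approx[OF Y[of n]] approx[OF Z] close \<epsilon>(2) by (simp only: real_norm_def) arith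
  qed
qed

section \<open>Truncation and the tree metric\<close>

lemma is_tree_prefix_closed: "is_tree t \<Longrightarrow> u \<in> t \<Longrightarrow> prefix v u \<Longrightarrow> v \<in> t"
  unfolding is_tree_def prefix_def by auto

lemma restr_restr: "h \<le> H \<Longrightarrow> restr h (restr H t) = restr h t"
  unfolding restr_def by auto

lemma restr_0: "is_tree t \<Longrightarrow> restr 0 t = {[]}"
  unfolding restr_def is_tree_def by auto

lemma restr_eq_bounded:
  assumes "t \<noteq> t'"
  shows "\<exists>b. \<forall>h. restr h t = restr h t' \<longrightarrow> h \<le> b"
proof -
  obtain u where u: "u \<in> t \<longleftrightarrow> u \<notin> t'" using assms by blast
  have "h \<le> length u" if "restr h t = restr h t'" for h
  proof (rule ccontr)
    assume "\<not> h \<le> length u"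
    then have "u \<in> restr h t \<longleftrightarrow> u \<in> t" "u \<in> restr h t' \<longleftrightarrow> u \<in> t'" unfolding restr_def by auto
    then show False using that u by auto
  qed
  then show ?thesis by blast
qed

lemma restr_eq_if_tree_dist_less:
  assumes "t \<in> Trees" "t' \<in> Trees" "tree_dist t t' < (1/2) ^ h"
  shows "restr h t = restr h t'"
proof (cases "t = t'")
  case False
  let ?H = "GREATEST h. restr h t = restr h t'"
  obtain b where b: "\<forall>h. restr h t = restr h t' \<longrightarrow> h \<le> b" using restr_eq_bounded[OF False] by blast
  have "restr 0 t = restr 0 t'" using assms(1,2) restr_0 unfolding Trees_def by simp
  then have H: "restr ?H t = restr ?H t'" by (rule GreatestI_nat[where b=b]) (use b in blast)
  have "(1/2::real) ^ ?H < (1/2) ^ h" using assms(3) False unfolding tree_dist_def by simp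
  then have "h < ?H" by (simp add: power_strict_decreasing_iff)
  then show ?thesis using H restr_restr[of h ?H t] restr_restr[of h ?H t'] by simp
qed simp

lemma tree_dist_le_if_restr_eq:
  assumes "restr h t = restr h t'"
  shows "tree_dist t t' \<le> (1/2) ^ h"
proof (cases "t = t'")
  case False
  obtain b where "\<forall>h. restr h t = restr h t' \<longrightarrow> h \<le> b" using restr_eq_bounded[OF False] by blast
  then have "h \<le> (GREATEST h. restr h t = restr h t')" using assms by (intro Greatest_le_nat) auto
  then show ?thesis using False unfolding tree_dist_def by (simp add: power_decreasing)
qed (simp add: tree_dist_def)

lemma space_tree_space: "space tree_space = Trees"
  unfolding tree_space_def by (subst space_measure_of) (auto simp: tree_open_def)

lemma tree_open_sets: "tree_open U \<Longrightarrow> U \<in> sets tree_space"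
  unfolding tree_space_def by (subst sets_measure_of) (auto simp: tree_open_def)

lemma tree_bounded_continuous_measurable:
  assumes "tree_bounded_continuous f"
  shows "f \<in> borel_measurable tree_space"
proof (rule borel_measurableI)
  fix S :: "real set" assume "open S"
  have "tree_open (f -` S \<inter> Trees)"
    unfolding tree_open_def
  proof (intro conjI ballI)
    fix t assume t: "t \<in> f -` S \<inter> Trees"
    then obtain e where "e > 0" and e: "\<And>y. dist y (f t) < e \<Longrightarrow> y \<in> S"
      using \<open>open S\<close> unfolding open_dist by blast
    then obtain d where "d > 0" and "\<forall>t'\<in>Trees. tree_dist t t' < d \<longrightarrow> \<bar>f t' - f t\<bar> < e"
      using assms t unfolding tree_bounded_continuous_def by blast
    then show "\<exists>d>0. \<forall>t'\<in>Trees. tree_dist t t' < d \<longrightarrow> t' \<in> f -` S \<inter> Trees"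
      using e by (auto simp: dist_real_def)
  qed auto
  then show "f -` S \<inter> space tree_space \<in> sets tree_space"
    using tree_open_sets space_tree_space by simp
qed

definition restr_determined :: "nat \<Rightarrow> node set set \<Rightarrow> bool" where
  "restr_determined h A \<longleftrightarrow>
     (\<forall>t\<in>Trees. \<forall>t'\<in>Trees. restr h t = restr h t' \<longrightarrow> (t \<in> A \<longleftrightarrow> t' \<in> A))"

lemma tree_bounded_continuous_indicator:
  assumes "restr_determined h A"
  shows "tree_bounded_continuous (indicator A :: node set \<Rightarrow> real)"
  unfolding tree_bounded_continuous_def
proof (intro conjI ballI allI impI)
  fix t :: "node set" and e :: real assume t: "t \<in> Trees" and "0 < e"
  have "indicator A t' = (indicator A t :: real)" if "t' \<in> Trees" "tree_dist t t' < (1/2) ^ h" for t'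
  proof -
    have "t' \<in> A \<longleftrightarrow> t \<in> A"
      using assms restr_eq_if_tree_dist_less[OF t that] that(1) t unfolding restr_determined_def by blast
    then show ?thesis by (simp add: indicator_def)
  qed
  then show "\<exists>\<delta>>0. \<forall>t'\<in>Trees. tree_dist t t' < \<delta> \<longrightarrow> \<bar>indicator A t' - indicator A t :: real\<bar> < e"
    using \<open>0 < e\<close> by (intro exI[of _ "(1/2) ^ h"]) auto
qed (auto intro: exI[of _ 1])

lemma restr_determined_sets: "restr_determined h A \<Longrightarrow> A \<subseteq> Trees \<Longrightarrow> A \<in> sets tree_space"
  using tree_bounded_continuous_measurable[OF tree_bounded_continuous_indicator, of h A]
  by (simp add: borel_measurable_indicator_iff space_tree_space Int_absorb2)

lemma restr_eq_self:
  assumes "is_tree w" "\<forall>u\<in>restr h w. length u < h"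
  shows "restr h w = w"
proof -
  have "length u \<le> h" if "u \<in> w" for u
  proof (rule ccontr)
    assume "\<not> length u \<le> h"
    then have "take h u \<in> restr h w" "length (take h u) = h"
      using is_tree_prefix_closed[OF assms(1) that take_is_prefix] unfolding restr_def by auto
    then show False using assms(2) by fastforce
  qed
  then show ?thesis unfolding restr_def by auto
qed

lemma finite_restr:
  assumes "is_tree t"
  shows "finite (restr n t)"
proof -
  define K where "K u = (SOME k. \<forall>i::nat. 1 \<le> i \<longrightarrow> (u @ [i] \<in> t \<longleftrightarrow> i \<le> k))" for u
  have K: "u @ [i] \<in> t \<longleftrightarrow> i \<le> K u" if "u \<in> t" "1 \<le> i" for u i
    using someI_ex[of "\<lambda>k. \<forall>i::nat. 1 \<le> i \<longrightarrow> (u @ [i] \<in> t \<longleftrightarrow> i \<le> k)"] assms that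
    unfolding K_def is_tree_def by blast
  have "restr (Suc n) t \<subseteq> restr n t \<union> (\<Union>u\<in>restr n t. (\<lambda>i. u @ [i]) ` {..K u})" for n
  proof
    fix v assume v: "v \<in> restr (Suc n) t"
    show "v \<in> restr n t \<union> (\<Union>u\<in>restr n t. (\<lambda>i. u @ [i]) ` {..K u})"
    proof (cases "length v \<le> n")
      case False
      then have "v \<noteq> []" by auto
      then have v_snoc: "v = butlast v @ [last v]" and "last v \<in> set v" by simp_all
      have parent: "butlast v \<in> restr n t"
        using v v_snoc is_tree_prefix_closed[OF assms, of v "butlast v"] unfolding restr_def
        by (auto intro: prefixI)
      have "1 \<le> last v" using assms v \<open>last v \<in> set v\<close> unfolding is_tree_def restr_def by blast
      then have "last v \<le> K (butlast v)"
        using K[of "butlast v" "last v"] v v_snoc parent unfolding restr_def by auto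
      then show ?thesis using parent v_snoc by blast
    qed (use v in \<open>auto simp: restr_def\<close>)
  qed
  then show ?thesis
    by (induction n) (auto simp: restr_0[OF assms] intro: finite_subset)
qed

lemma finite_tree_leaves_nonempty:
  assumes "is_tree t" "finite t"
  shows "leaves t \<noteq> {}"
proof -
  have "t \<noteq> {}" using assms(1) unfolding is_tree_def by auto
  then have "Max (length ` t) \<in> length ` t" using assms(2) by (intro Max_in) auto
  then obtain u where "u \<in> t" "length u = Max (length ` t)" by auto
  moreover have "\<forall>v\<in>t. length v \<le> Max (length ` t)" using assms(2) by simp
  ultimately have "u \<in> leaves t" unfolding leaves_def by fastforce
  then show ?thesis by blast
qed

section \<open>Graft sets\<close>

definition graft_trees :: "node set \<Rightarrow> node \<Rightarrow> node set set" where
  "graft_trees t x = {w \<in> Trees. t \<subseteq> w \<and> (\<forall>u \<in> w - t. prefix x u)}"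

lemma graft_set_Int_Trees:
  assumes "x \<in> t"
  shows "graft_set t x \<inter> Trees = graft_trees t x"
proof
  show "graft_set t x \<inter> Trees \<subseteq> graft_trees t x"
    unfolding graft_set_def graft_def graft_trees_def by auto
next
  show "graft_trees t x \<subseteq> graft_set t x \<inter> Trees"
  proof
    fix w assume w: "w \<in> graft_trees t x"
    then have w_tree: "is_tree w" and "t \<subseteq> w" and w_pref: "\<forall>u \<in> w - t. prefix x u"
      unfolding graft_trees_def Trees_def by auto
    define s where "s = {v. x @ v \<in> w}"
    have "is_tree s" unfolding is_tree_def
    proof (intro conjI ballI allI impI)
      show "1 \<le> i" if "u \<in> s" "i \<in> set u" for u i
        using w_tree that unfolding is_tree_def s_def by fastforce
      show "[] \<in> s" using assms \<open>t \<subseteq> w\<close> unfolding s_def by auto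
      show "u \<in> s" if "u @ v \<in> s" for u v
        using is_tree_prefix_closed[OF w_tree, of "x @ u @ v" "x @ u"] that unfolding s_def by simp
      show "\<exists>k. \<forall>i. 1 \<le> i \<longrightarrow> (u @ [i] \<in> s) = (i \<le> k)" if "u \<in> s" for u
        using w_tree that unfolding is_tree_def s_def by (metis append.assoc mem_Collect_eq)
    qed
    moreover have "w = graft t s x"
      using \<open>t \<subseteq> w\<close> w_pref unfolding graft_def s_def by (auto simp: prefix_def)
    ultimately show "w \<in> graft_set t x \<inter> Trees" using w unfolding graft_set_def Trees_def graft_trees_def by auto
  qed
qed

lemma restr_determined_singleton:
  assumes "\<forall>u\<in>t. length u < h"
  shows "restr_determined h {t}"
proof -
  have "w = t" if "w \<in> Trees" "restr h w = restr h t" for w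
  proof -
    have "restr h t = t" using assms unfolding restr_def by auto
    then have "restr h w = w" using that assms by (intro restr_eq_self) (auto simp: Trees_def)
    then show ?thesis using that \<open>restr h t = t\<close> by simp
  qed
  then show ?thesis unfolding restr_determined_def by auto
qed

lemma restr_determined_graft_trees:
  assumes "x \<in> t" "\<forall>u\<in>t. length u < h"
  shows "restr_determined h (graft_trees t x)"
proof -
  have "w' \<in> graft_trees t x" if w: "w \<in> graft_trees t x" and "w' \<in> Trees" "restr h w = restr h w'" for w w'
  proof -
    have "t \<subseteq> w" and w_pref: "\<forall>u \<in> w - t. prefix x u" using w unfolding graft_trees_def by auto
    have w': "is_tree w'" using \<open>w' \<in> Trees\<close> unfolding Trees_def by auto
    have "t \<subseteq> restr h w" using \<open>t \<subseteq> w\<close> assms(2) unfolding restr_def by fastforce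
    then have "t \<subseteq> w'" using that(3) unfolding restr_def by auto
    moreover have "prefix x u" if "u \<in> w'" "u \<notin> t" for u
    proof (cases "length u \<le> h")
      case True
      then show ?thesis using w_pref that \<open>restr h w = restr h w'\<close> unfolding restr_def by blast
    next
      case False
      then have "take h u \<in> restr h w" "take h u \<notin> t"
        using is_tree_prefix_closed[OF w' that(1) take_is_prefix] \<open>restr h w = restr h w'\<close> assms(2)
        unfolding restr_def by auto
      then have "prefix x (take h u)" using w_pref unfolding restr_def by blast
      then show ?thesis using take_is_prefix prefix_order.trans by blast
    qed
    ultimately show ?thesis using \<open>w' \<in> Trees\<close> unfolding graft_trees_def by blast
  qed
  then show ?thesis unfolding restr_determined_def graft_trees_def by blast
qed

lemma leaf_prefix_eq:
  assumes "is_tree t" "x \<in> leaves t" "u \<in> t" "prefix x u"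
  shows "u = x"
proof (rule ccontr)
  assume "u \<noteq> x"
  obtain v where "u = x @ v" using assms(4) by (auto simp: prefix_def)
  with \<open>u \<noteq> x\<close> obtain i v' where u: "u = x @ i # v'" by (cases v) auto
  then have "x @ [i] \<in> t" using is_tree_prefix_closed[OF assms(1,3)] by (simp add: prefix_def)
  moreover have "1 \<le> i" using assms(1,3) u unfolding is_tree_def by auto
  ultimately show False using assms(2) unfolding leaves_def by blast
qed

lemma graft_trees_subset:
  assumes "is_tree t" "x \<in> leaves t" "x' \<in> t'" "prefix x x'"
    and "w \<in> graft_trees t x \<inter> graft_trees t' x'"
  shows "graft_trees t' x' \<subseteq> graft_trees t x"
proof
  fix w' assume w': "w' \<in> graft_trees t' x'"
  have w: "t \<subseteq> w" "t' \<subseteq> w" "\<forall>u \<in> w - t. prefix x u" "\<forall>u \<in> w - t'. prefix x' u"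
    using assms(5) unfolding graft_trees_def by auto
  have "t' \<subseteq> w'" and w'_pref: "\<forall>u \<in> w' - t'. prefix x' u" using w' unfolding graft_trees_def by auto
  have "u \<in> w'" if "u \<in> t" for u
  proof (cases "u \<in> t'")
    case False
    then have "prefix x' u" using w that by blast
    then have "u = x" using leaf_prefix_eq[OF assms(1,2) that] assms(4) by (auto dest: prefix_order.trans)
    then show ?thesis using False assms(3,4) \<open>prefix x' u\<close> prefix_order.antisym by blast
  qed (use \<open>t' \<subseteq> w'\<close> in blast)
  moreover have "prefix x u" if "u \<in> w' - t" for u
    using w w'_pref that assms(4) \<open>t' \<subseteq> w'\<close> by (cases "u \<in> t'") (auto dest: prefix_order.trans)
  ultimately show "w' \<in> graft_trees t x" using w' unfolding graft_trees_def by blast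
qed

lemma graft_trees_Int_incomparable:
  assumes "\<not> prefix x x'" "\<not> prefix x' x"
  shows "graft_trees t x \<inter> graft_trees t' x' \<subseteq> {t \<union> t'}"
proof
  fix w assume "w \<in> graft_trees t x \<inter> graft_trees t' x'"
  then have "t \<union> t' \<subseteq> w" "\<forall>u \<in> w - (t \<union> t'). prefix x u \<and> prefix x' u"
    unfolding graft_trees_def by auto
  then have "w = t \<union> t'" using assms prefix_same_cases by blast
  then show "w \<in> {t \<union> t'}" by simp
qed

definition basic_tree_sets :: "node set set set" where
  "basic_tree_sets = {{t} | t. t \<in> Trees0} \<union> {graft_trees t x | t x. t \<in> Trees0 \<and> x \<in> leaves t}"

lemma basic_tree_setsE:
  assumes "A \<in> basic_tree_sets"
  obtains (singleton) t where "t \<in> Trees0" "A = {t}"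
    | (graft) t x where "t \<in> Trees0" "x \<in> leaves t" "A = graft_trees t x"
  using assms unfolding basic_tree_sets_def by blast

lemma Int_graft_trees:
  assumes "t \<in> Trees0" "x \<in> leaves t" "t' \<in> Trees0" "x' \<in> leaves t'"
  shows "graft_trees t x \<inter> graft_trees t' x' \<in> insert {} basic_tree_sets"
proof -
  have trees: "is_tree t" "is_tree t'" and "x \<in> t" "x' \<in> t'"
    using assms unfolding Trees0_def Trees_def leaves_def by auto
  show ?thesis
  proof (cases "graft_trees t x \<inter> graft_trees t' x' = {}")
    case False
    then obtain w where w: "w \<in> graft_trees t x \<inter> graft_trees t' x'" by blast
    consider "prefix x x'" | "prefix x' x" | "\<not> prefix x x'" "\<not> prefix x' x" by blast
    then show ?thesis
    proof cases
      case 1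
      then have "graft_trees t x \<inter> graft_trees t' x' = graft_trees t' x'"
        using graft_trees_subset[OF trees(1) assms(2) \<open>x' \<in> t'\<close> 1 w] by blast
      then show ?thesis using assms(3,4) unfolding basic_tree_sets_def by auto
    next
      case 2
      then have "graft_trees t x \<inter> graft_trees t' x' = graft_trees t x"
        using graft_trees_subset[OF trees(2) assms(4) \<open>x \<in> t\<close> 2] w by blast
      then show ?thesis using assms(1,2) unfolding basic_tree_sets_def by auto
    next
      case 3
      then have "graft_trees t x \<inter> graft_trees t' x' = {t \<union> t'}"
        using graft_trees_Int_incomparable w by blast
      moreover have "t \<union> t' \<in> Trees0" using w calculation assms unfolding graft_trees_def Trees0_def by auto
      ultimately show ?thesis unfolding basic_tree_sets_def by blast
    qed
  qed simp
qed

lemma Int_basic_tree_sets: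
  assumes "A \<in> basic_tree_sets" "B \<in> basic_tree_sets"
  shows "A \<inter> B \<in> insert {} basic_tree_sets"
proof -
  have singleton_Int: "{t} \<inter> C \<in> insert {} basic_tree_sets" if "t \<in> Trees0" for t C
    using that unfolding basic_tree_sets_def by (cases "t \<in> C") auto
  show ?thesis
    using assms(1)
  proof (cases rule: basic_tree_setsE)
    case (graft t x)
    show ?thesis
      using assms(2)
    proof (cases rule: basic_tree_setsE)
      case (singleton t')
      then show ?thesis using singleton_Int[of t' A] by (simp add: Int_commute)
    qed (use graft Int_graft_trees in simp)
  qed (use singleton_Int in simp)
qed

lemma countable_basic_tree_sets: "countable basic_tree_sets"
proof -
  have "countable Trees0"
    by (rule countable_subset[OF _ countable_Collect_finite]) (auto simp: Trees0_def)
  moreover have "basic_tree_sets = (\<lambda>t. {t}) ` Trees0 \<union> (\<lambda>(t, x). graft_trees t x) ` (SIGMA t:Trees0. leaves t)"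
    unfolding basic_tree_sets_def by auto
  ultimately show ?thesis by (metis countable_SIGMA countable_Un countable_image countableI_type)
qed

lemma basic_tree_sets_restr_determined:
  assumes "A \<in> basic_tree_sets"
  obtains h where "restr_determined h A"
proof -
  obtain t where "t \<in> Trees0" and A: "A = {t} \<or> (\<exists>x\<in>leaves t. A = graft_trees t x)"
    using assms by (cases rule: basic_tree_setsE) auto
  then have "finite (length ` t)" unfolding Trees0_def by simp
  then obtain h where "\<forall>u\<in>t. length u < h" by (meson finite_nat_set_iff_bounded imageI)
  then have "restr_determined h A"
    using A restr_determined_singleton restr_determined_graft_trees unfolding leaves_def by blast
  then show ?thesis by (rule that)
qed

lemma basic_tree_sets_sets: "A \<in> basic_tree_sets \<Longrightarrow> A \<in> sets tree_space"
  by (rule basic_tree_sets_restr_determined, assumption, erule restr_determined_sets)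
    (auto simp: basic_tree_sets_def Trees0_def graft_trees_def)

section \<open>Small graft sets around trees with one spine\<close>

lemma M_pref_eq_Longest_common_prefix:
  assumes "s \<noteq> {}"
  shows "M_pref s = Longest_common_prefix s"
  unfolding M_pref_def using assms
  by (intro the1_equality[OF Longest_common_prefix_unique])
    (auto intro: Longest_common_prefix_prefix Longest_common_prefix_longest)

definition prune :: "node set \<Rightarrow> node \<Rightarrow> node set" where
  "prune t x = {u \<in> t. \<not> strict_prefix x u}"

lemma is_tree_prune:
  assumes "is_tree t"
  shows "is_tree (prune t x)"
  unfolding is_tree_def
proof (intro conjI ballI allI impI)
  show "1 \<le> i" if "u \<in> prune t x" "i \<in> set u" for u i
    using assms that unfolding is_tree_def prune_def by blast
  show "[] \<in> prune t x" using assms unfolding is_tree_def prune_def by simp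
  show "u \<in> prune t x" if "u @ v \<in> prune t x" for u v
    using that is_tree_prefix_closed[OF assms, of "u @ v" u] unfolding prune_def
    using prefix_order.less_le_trans[of x u "u @ v"] by auto
  show "\<exists>k. \<forall>i. 1 \<le> i \<longrightarrow> (u @ [i] \<in> prune t x) = (i \<le> k)" if "u \<in> prune t x" for u
  proof (cases "u = x")
    case True
    then show ?thesis unfolding prune_def by (intro exI[of _ 0]) (auto simp: strict_prefix_def)
  next
    case False
    then have "\<not> strict_prefix x (u @ [i])" for i
      using that unfolding prune_def by (auto simp: strict_prefix_def prefix_snoc)
    then show ?thesis using assms that unfolding is_tree_def prune_def by auto
  qed
qed

lemma leaf_prune: "x \<in> t \<Longrightarrow> x \<in> leaves (prune t x)"
  unfolding leaves_def prune_def by (auto simp: strict_prefix_def)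

lemma mem_graft_trees_prune: "t \<in> Trees \<Longrightarrow> t \<in> graft_trees (prune t x) x"
  unfolding graft_trees_def prune_def by (auto simp: strict_prefix_def)

lemma restr_prune: "restr (length x) (prune t x) = restr (length x) t"
  unfolding restr_def prune_def by (auto dest: prefix_length_less)

lemma restr_graft_trees:
  assumes "x \<in> s" "w \<in> graft_trees s x"
  shows "restr (length x) w = restr (length x) s"
  using assms unfolding restr_def graft_trees_def
  by (auto simp: Ball_def) (metis DiffI prefix_length_prefix prefix_order.antisym prefix_order.refl)

lemma finite_prune:
  assumes "is_tree t" "length x \<le> n" "\<forall>v\<in>level t n. prefix x v"
  shows "finite (prune t x)"
proof -
  have "prune t x \<subseteq> restr n t"
  proof
    fix u assume u: "u \<in> prune t x"
    have "length u \<le> n"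
    proof (rule ccontr)
      assume "\<not> length u \<le> n"
      then have "take n u \<in> level t n"
        using is_tree_prefix_closed[OF assms(1) _ take_is_prefix] u unfolding level_def prune_def by auto
      then have "prefix x u" using assms(3) prefix_order.trans take_is_prefix by blast
      then show False using u \<open>\<not> length u \<le> n\<close> assms(2) unfolding prune_def by (auto simp: strict_prefix_def)
    qed
    then show "u \<in> restr n t" using u unfolding restr_def prune_def by blast
  qed
  then show ?thesis using finite_restr[OF assms(1)] finite_subset by blast
qed

lemma Trees1_basic_nbhd:
  assumes "c \<in> Trees1"
  obtains t x where "t \<in> Trees0" "x \<in> leaves t" "c \<in> graft_trees t x"
    "\<forall>w\<in>graft_trees t x. restr h w = restr h c"
proof -
  have c: "is_tree c" "\<And>n. level c n \<noteq> {}" "filterlim (\<lambda>n. length (M_pref (level c n))) at_top sequentially"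
    using assms unfolding Trees1_def Trees_def by auto
  then obtain n where n: "h \<le> length (M_pref (level c n))"
    unfolding filterlim_at_top eventually_sequentially by blast
  \<comment> \<open>All nodes of level \<open>n\<close> lie below the node \<open>x\<close> of depth \<open>h\<close> on the spine, so cutting \<open>c\<close>
    below \<open>x\<close> leaves a finite tree.\<close>
  define y where "y = Longest_common_prefix (level c n)"
  define x where "x = take h y"
  obtain v0 where v0: "v0 \<in> level c n" using c(2) by blast
  have y: "\<forall>v\<in>level c n. prefix y v" unfolding y_def by (auto intro: Longest_common_prefix_prefix)
  then have "length y \<le> n" using v0 prefix_length_le unfolding level_def by fastforce
  moreover have "h \<le> length y" using n M_pref_eq_Longest_common_prefix[OF c(2)] unfolding y_def by simp
  ultimately have x_len: "length x = h" "h \<le> n" unfolding x_def by auto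
  have x_pref: "\<forall>v\<in>level c n. prefix x v"
    using y take_is_prefix prefix_order.trans unfolding x_def by blast
  then have "x \<in> c" using v0 is_tree_prefix_closed[OF c(1)] unfolding level_def by blast
  define t where "t = prune c x"
  have "t \<in> Trees0"
    using is_tree_prune[OF c(1)] finite_prune[OF c(1) _ x_pref] x_len unfolding t_def Trees0_def Trees_def by simp
  moreover have "x \<in> leaves t" unfolding t_def using leaf_prune[OF \<open>x \<in> c\<close>] .
  moreover have "c \<in> graft_trees t x" unfolding t_def using c(1) by (intro mem_graft_trees_prune) (simp add: Trees_def)
  moreover have "\<forall>w\<in>graft_trees t x. restr h w = restr h c"
  proof
    fix w assume "w \<in> graft_trees t x"
    moreover have "x \<in> t" using \<open>x \<in> leaves t\<close> unfolding leaves_def by blast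
    ultimately show "restr h w = restr h c"
      using restr_graft_trees[of x t w] restr_prune[of x c] x_len(1) unfolding t_def by simp
  qed
  ultimately show ?thesis by (rule that)
qed

lemma basic_tree_sets_nbhd:
  assumes "c \<in> Trees0 \<union> Trees1"
  obtains A where "A \<in> basic_tree_sets" "c \<in> A" "\<forall>w\<in>A. restr h w = restr h c"
proof (cases "c \<in> Trees0")
  case True
  then have "{c} \<in> basic_tree_sets" unfolding basic_tree_sets_def by blast
  then show ?thesis by (rule that) auto
next
  case False
  then have "c \<in> Trees1" using assms by blast
  then obtain t x where "t \<in> Trees0" "x \<in> leaves t" "c \<in> graft_trees t x"
    and restr_eq: "\<forall>w\<in>graft_trees t x. restr h w = restr h c"
    by (rule Trees1_basic_nbhd)
  then have "graft_trees t x \<in> basic_tree_sets" unfolding basic_tree_sets_def by blast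
  then show ?thesis using \<open>c \<in> graft_trees t x\<close> restr_eq by (rule that)
qed

lemma basic_tree_sets_small_oscillation:
  assumes f: "tree_bounded_continuous f" and c: "c \<in> Trees0 \<union> Trees1" and "0 < \<epsilon>"
  obtains A where "A \<in> basic_tree_sets" "c \<in> A" "\<forall>x\<in>A. \<forall>y\<in>A. \<bar>f x - f y\<bar> \<le> \<epsilon>"
proof -
  have "c \<in> Trees" using c unfolding Trees0_def Trees1_def by blast
  moreover have "0 < \<epsilon> / 2" using \<open>0 < \<epsilon>\<close> by simp
  ultimately obtain \<delta> where "\<delta> > 0" and \<delta>: "\<forall>t\<in>Trees. tree_dist c t < \<delta> \<longrightarrow> \<bar>f t - f c\<bar> < \<epsilon> / 2"
    using f unfolding tree_bounded_continuous_def by blast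
  obtain h where "(1/2::real) ^ h < \<delta>" using real_arch_pow_inv[OF \<open>\<delta> > 0\<close>, of "1/2"] by auto
  obtain A where A: "A \<in> basic_tree_sets" "c \<in> A" "\<forall>w\<in>A. restr h w = restr h c"
    using basic_tree_sets_nbhd[OF c] by blast
  have close: "\<bar>f w - f c\<bar> < \<epsilon> / 2" if "w \<in> A" for w
  proof -
    have "w \<in> Trees" using A(1) that unfolding basic_tree_sets_def Trees0_def graft_trees_def by blast
    moreover have "tree_dist c w \<le> (1/2) ^ h" using A(3) that by (intro tree_dist_le_if_restr_eq) simp
    then have "tree_dist c w < \<delta>" using \<open>(1/2) ^ h < \<delta>\<close> by linarith
    ultimately show ?thesis using \<delta> by blast
  qed
  have "\<bar>f x - f y\<bar> \<le> \<epsilon>" if "x \<in> A" "y \<in> A" for x y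
    using close[OF that(1)] close[OF that(2)] by arith
  then show ?thesis using A that by blast
qed

section \<open>Convergence in distribution\<close>

lemma (in prob_space) tendsto_prob_if_conv_distr:
  assumes "conv_distr M T X" "restr_determined h A"
  shows "(\<lambda>n. prob {\<omega> \<in> space M. T n \<omega> \<in> A}) \<longlonglongrightarrow> prob {\<omega> \<in> space M. X \<omega> \<in> A}"
proof -
  have integral_eq: "(\<integral>\<omega>. indicator A (Y \<omega>) \<partial>M) = prob {\<omega> \<in> space M. Y \<omega> \<in> A}"
    for Y :: "'a \<Rightarrow> node set"
  proof -
    have "(\<integral>\<omega>. indicator A (Y \<omega>) \<partial>M) = (\<integral>\<omega>. indicator {\<omega> \<in> space M. Y \<omega> \<in> A} \<omega> \<partial>M :: real)"
      by (rule Bochner_Integration.integral_cong) (auto simp: indicator_def)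
    then show ?thesis by (simp add: Int_absorb2 subset_eq)
  qed
  have "(\<lambda>n. \<integral>\<omega>. indicator A (T n \<omega>) \<partial>M) \<longlonglongrightarrow> (\<integral>\<omega>. indicator A (X \<omega>) \<partial>M :: real)"
    using assms tree_bounded_continuous_indicator unfolding conv_distr_def by blast
  then show ?thesis unfolding integral_eq .
qed

lemma (in prob_space) conv_distr_if_tendsto_prob_basic:
  assumes T: "\<And>n. T n \<in> measurable M tree_space" and X: "X \<in> measurable M tree_space"
    and X_concentrated: "AE \<omega> in M. X \<omega> \<in> Trees0 \<union> Trees1"
    and conv: "\<And>A. A \<in> basic_tree_sets \<Longrightarrow>
      (\<lambda>n. prob {\<omega> \<in> space M. T n \<omega> \<in> A}) \<longlonglongrightarrow> prob {\<omega> \<in> space M. X \<omega> \<in> A}"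
  shows "conv_distr M T X"
  unfolding conv_distr_def
proof (intro allI impI)
  fix f assume f: "tree_bounded_continuous f"
  then obtain B where B: "\<forall>t\<in>Trees. \<bar>f t\<bar> \<le> B" unfolding tree_bounded_continuous_def by blast
  let ?C = "insert {} basic_tree_sets"
  show "(\<lambda>n. \<integral>\<omega>. f (T n \<omega>) \<partial>M) \<longlonglongrightarrow> (\<integral>\<omega>. f (X \<omega>) \<partial>M)"
  proof (rule tendsto_integral_if_tendsto_prob_Int_stable[OF T X, where C = ?C and B = B])
    show "countable ?C" using countable_basic_tree_sets by simp
    show "?C \<subseteq> sets tree_space" using basic_tree_sets_sets by blast
    show "A \<inter> A' \<in> ?C" if "A \<in> ?C" "A' \<in> ?C" for A A'
      using that Int_basic_tree_sets by blast
    show "(\<lambda>n. prob {\<omega> \<in> space M. T n \<omega> \<in> A}) \<longlonglongrightarrow> prob {\<omega> \<in> space M. X \<omega> \<in> A}"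
      if "A \<in> ?C" for A
      using that conv by auto
    show "f \<in> borel_measurable tree_space" using f by (rule tree_bounded_continuous_measurable)
    show "\<bar>f t\<bar> \<le> B" if "t \<in> space tree_space" for t using B that by (simp add: space_tree_space)
    show "AE \<omega> in M. \<forall>\<epsilon>>0. \<exists>A\<in>?C. X \<omega> \<in> A \<and> (\<forall>x\<in>A. \<forall>y\<in>A. \<bar>f x - f y\<bar> \<le> \<epsilon>)"
      using X_concentrated
    proof eventually_elim
      case (elim \<omega>)
      show ?case
      proof (intro allI impI)
        fix \<epsilon> :: real assume "0 < \<epsilon>"
        then obtain A where "A \<in> basic_tree_sets" "X \<omega> \<in> A" "\<forall>x\<in>A. \<forall>y\<in>A. \<bar>f x - f y\<bar> \<le> \<epsilon>"
          by (rule basic_tree_sets_small_oscillation[OF f elim])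
        then show "\<exists>A\<in>?C. X \<omega> \<in> A \<and> (\<forall>x\<in>A. \<forall>y\<in>A. \<bar>f x - f y\<bar> \<le> \<epsilon>)" by blast
      qed
    qed
  qed simp
qed

lemma (in prob_space) tendsto_prob_basic_tree_sets_iff:
  assumes T: "\<And>n. T n \<in> measurable M tree_space" and X: "X \<in> measurable M tree_space"
  shows "(\<forall>A\<in>basic_tree_sets.
      (\<lambda>n. prob {\<omega> \<in> space M. T n \<omega> \<in> A}) \<longlonglongrightarrow> prob {\<omega> \<in> space M. X \<omega> \<in> A}) \<longleftrightarrow>
    (\<forall>t\<in>Trees0. \<forall>x\<in>leaves t.
       (\<lambda>n. prob {\<omega> \<in> space M. T n \<omega> \<in> graft_set t x})
          \<longlonglongrightarrow> prob {\<omega> \<in> space M. X \<omega> \<in> graft_set t x}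
     \<and> (\<lambda>n. prob {\<omega> \<in> space M. T n \<omega> = t})
          \<longlonglongrightarrow> prob {\<omega> \<in> space M. X \<omega> = t})"
proof -
  have graft_event: "{\<omega> \<in> space M. Y \<omega> \<in> graft_set t x} = {\<omega> \<in> space M. Y \<omega> \<in> graft_trees t x}"
    if "Y \<in> measurable M tree_space" "x \<in> leaves t" for Y t x
    using that graft_set_Int_Trees[of x t] measurable_space[OF that(1)]
    by (auto simp: space_tree_space leaves_def)
  have singleton_event: "{\<omega> \<in> space M. Y \<omega> = t} = {\<omega> \<in> space M. Y \<omega> \<in> {t}}" for Y :: "'a \<Rightarrow> node set" and t
    by simp
  show ?thesis (is "?basic \<longleftrightarrow> ?graft")
  proof
    assume ?basic
    show ?graft
    proof (intro ballI conjI)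
      fix t x assume "t \<in> Trees0" "x \<in> leaves t"
      then have "graft_trees t x \<in> basic_tree_sets" "{t} \<in> basic_tree_sets"
        unfolding basic_tree_sets_def by blast+
      then show "(\<lambda>n. prob {\<omega> \<in> space M. T n \<omega> \<in> graft_set t x})
          \<longlonglongrightarrow> prob {\<omega> \<in> space M. X \<omega> \<in> graft_set t x}"
        and "(\<lambda>n. prob {\<omega> \<in> space M. T n \<omega> = t}) \<longlonglongrightarrow> prob {\<omega> \<in> space M. X \<omega> = t}"
        using \<open>?basic\<close> graft_event[OF T \<open>x \<in> leaves t\<close>] graft_event[OF X \<open>x \<in> leaves t\<close>]
        by (simp_all only: singleton_event)
    qed
  next
    assume ?graft
    show ?basic
    proof
      fix A assume "A \<in> basic_tree_sets"
      then show "(\<lambda>n. prob {\<omega> \<in> space M. T n \<omega> \<in> A}) \<longlonglongrightarrow> prob {\<omega> \<in> space M. X \<omega> \<in> A}"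
      proof (cases rule: basic_tree_setsE)
        case (singleton t)
        then obtain x where "x \<in> leaves t"
          using finite_tree_leaves_nonempty unfolding Trees0_def Trees_def by blast
        then show ?thesis using \<open>?graft\<close> singleton by (simp only: singleton_event)
      next
        case (graft t x)
        then have "(\<lambda>n. prob {\<omega> \<in> space M. T n \<omega> \<in> graft_set t x})
            \<longlonglongrightarrow> prob {\<omega> \<in> space M. X \<omega> \<in> graft_set t x}"
          using \<open>?graft\<close> by blast
        then show ?thesis using graft(3) graft_event[OF T graft(2)] graft_event[OF X graft(2)] by simp
      qed
    qed
  qed
qed

lemma (in prob_space) conv_distr_iff_tendsto_prob_basic:
  assumes "\<And>n. T n \<in> measurable M tree_space" "X \<in> measurable M tree_space"
    and "AE \<omega> in M. X \<omega> \<in> Trees0 \<union> Trees1"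
  shows "conv_distr M T X \<longleftrightarrow> (\<forall>A\<in>basic_tree_sets.
    (\<lambda>n. prob {\<omega> \<in> space M. T n \<omega> \<in> A}) \<longlonglongrightarrow> prob {\<omega> \<in> space M. X \<omega> \<in> A})"
proof
  assume conv: "conv_distr M T X"
  show "\<forall>A\<in>basic_tree_sets.
    (\<lambda>n. prob {\<omega> \<in> space M. T n \<omega> \<in> A}) \<longlonglongrightarrow> prob {\<omega> \<in> space M. X \<omega> \<in> A}"
  proof
    fix A assume "A \<in> basic_tree_sets"
    then obtain h where "restr_determined h A" by (rule basic_tree_sets_restr_determined)
    with conv show "(\<lambda>n. prob {\<omega> \<in> space M. T n \<omega> \<in> A}) \<longlonglongrightarrow> prob {\<omega> \<in> space M. X \<omega> \<in> A}"
      by (rule tendsto_prob_if_conv_distr)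
  qed
next
  assume "\<forall>A\<in>basic_tree_sets.
    (\<lambda>n. prob {\<omega> \<in> space M. T n \<omega> \<in> A}) \<longlonglongrightarrow> prob {\<omega> \<in> space M. X \<omega> \<in> A}"
  then show "conv_distr M T X" by (intro conv_distr_if_tendsto_prob_basic[OF assms]) blast
qed

theorem lemma2p1:
  fixes P :: "'a measure" and T :: "nat \<Rightarrow> 'a \<Rightarrow> node set" and X :: "'a \<Rightarrow> node set"
  assumes "prob_space P"
    and "\<And>n. T n \<in> measurable P tree_space"
    and "X \<in> measurable P tree_space"
    and "\<And>n. AE \<omega> in P. T n \<omega> \<in> Trees0 \<union> Trees1"
    and "AE \<omega> in P. X \<omega> \<in> Trees0 \<union> Trees1"
  shows "conv_distr P T X \<longleftrightarrow>
    (\<forall>t\<in>Trees0. \<forall>x\<in>leaves t.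
       (\<lambda>n. measure P {\<omega> \<in> space P. T n \<omega> \<in> graft_set t x})
          \<longlonglongrightarrow> measure P {\<omega> \<in> space P. X \<omega> \<in> graft_set t x}
     \<and> (\<lambda>n. measure P {\<omega> \<in> space P. T n \<omega> = t})
          \<longlonglongrightarrow> measure P {\<omega> \<in> space P. X \<omega> = t})"
proof -
  \<comment> \<open>Only the limit needs to be concentrated on \<open>Trees0 \<union> Trees1\<close>.\<close>
  interpret prob_space P by fact
  show ?thesis
    using conv_distr_iff_tendsto_prob_basic[OF assms(2,3,5)] tendsto_prob_basic_tree_sets_iff[OF assms(2,3)]
    by simp
qed

end
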